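(* Let $\{w^k\}$ be generated by Algorithm 2 (running infinitely) and suppose the sequence $\{\varepsilon^k\}$ is bounded. Then each accumulation point $\bar w$ of $\{w^k\}$ is an M-stationary point of the feasibility problem $\min_w\frac12 d_C^2(G(w))$ s.t. $w\in D$, i.e., $\bar w\in D$ and $0\in G'(\bar w)^*[G(\bar w)-P_C(G(\bar w))]+\mathcal N^{\lim}_D(\bar w)$.
   Context: Standing setting: $\mathbb W,\mathbb Y$ Euclidean spaces; (P) is $\min f(w)$ s.t. $G(w)\in C$, $w\in D$, with $f\colon\mathbb W\to\mathbb R$, $G\colon\mathbb W\to\mathbb Y$ continuously differentiable, $C\subset\mathbb Y$ nonempty closed convex, $D\subset\mathbb W$ nonempty closed. $P_C$ is the Euclidean projection onto $C$, $d_C(y)=\|y-P_C(y)\|$; $\mathcal N^{\lim}_D(\bar w):=\limsup_{w\to\bar w}\operatorname{cone}(w-\Pi_D(w))$ for $\bar w\in D$ ($\Pi_D$ multivalued projection, outer set limit), $\varnothing$ for $\bar w\notin D$. Augmented Lagrangian $\mathcal L_\rho(w,\lambda):=f(w)+\frac\rho2 d_C^2(G(w)+\lambda/\rho)$; $V_\rho(w,u):=\|G(w)-P_C(G(w)+u/\rho)\|$. Algorithm 2: data $\rho_0>0$, $\beta>1$, $\eta\in(0,1)$, $w^0\in D$, a nonempty bounded set $U\subset\mathbb Y$. For $k=0,1,\dots$: choose $u^k\in U$; compute $w^{k+1}$ and $\varepsilon^{k+1}\in\mathbb W$ with $\varepsilon^{k+1}\in\nabla_w\mathcal L_{\rho_k}(w^{k+1},u^k)+\mathcal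 N^{\lim}_D(w^{k+1})$ (so $w^{k+1}\in D$); set $\lambda^{k+1}:=\rho_k[G(w^{k+1})+u^k/\rho_k-P_C(G(w^{k+1})+u^k/\rho_k)]$; if $k=0$ or $V_{\rho_k}(w^{k+1},u^k)\le\eta V_{\rho_{k-1}}(w^k,u^{k-1})$ set $\rho_{k+1}:=\rho_k$, else $\rho_{k+1}:=\beta\rho_k$. *)

theory Defs
  imports "HOL-Analysis.Analysis"
begin

definition projC :: "'y::euclidean_space set \<Rightarrow> 'y \<Rightarrow> 'y" where
  "projC C y = closest_point C y"

definition distC :: "'y::euclidean_space set \<Rightarrow> 'y \<Rightarrow> real" where
  "distC C y = norm (y - projC C y)"

definition projSet :: "'w::euclidean_space set \<Rightarrow> 'w \<Rightarrow> 'w set" where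
  "projSet D w = {p \<in> D. dist w p = infdist w D}"

definition limNormal :: "'w::euclidean_space set \<Rightarrow> 'w \<Rightarrow> 'w set" where
  "limNormal D wbar =
     (if wbar \<in> D then
        {v. \<exists>x vs. x \<longlonglongrightarrow> wbar \<and> vs \<longlonglongrightarrow> v \<and>
              (\<forall>k. vs k \<in> {t *\<^sub>R (x k - p) | t p. t \<ge> 0 \<and> p \<in> projSet D (x k)})}
      else {})"

definition grad :: "('w::euclidean_space \<Rightarrow> real) \<Rightarrow> 'w \<Rightarrow> 'w" where
  "grad F w = (THE g. GDERIV F w :> g)"

definition augLag ::
  "('w::euclidean_space \<Rightarrow> real) \<Rightarrow> ('w \<Rightarrow> 'y::euclidean_space) \<Rightarrow> 'y set
     \<Rightarrow> real \<Rightarrow> 'w \<Rightarrow> 'y \<Rightarrow> real" where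
  "augLag f G C \<rho> w lam = f w + \<rho> / 2 * (distC C (G w + lam /\<^sub>R \<rho>))\<^sup>2"

definition Vfun ::
  "('w::euclidean_space \<Rightarrow> 'y::euclidean_space) \<Rightarrow> 'y set \<Rightarrow> real \<Rightarrow> 'w \<Rightarrow> 'y \<Rightarrow> real" where
  "Vfun G C \<rho> w u = norm (G w - projC C (G w + u /\<^sub>R \<rho>))"

end

theory Submission
  imports Defs
begin

(* Either the penalties rho_k stay bounded or they tend to infinity.
   If they stay bounded, the update rule raises them only finitely often (each raise adds at
   least (beta - 1) rho_0), so eventually V_{k+1} <= eta V_k: the infeasibility tends to zero
   geometrically and the accumulation point is feasible, G(wbar) : C.  Then the stationarity
   condition holds with the zero normal vector.
   If they are unbounded, divide the approximate stationarity condition of the subproblems by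
   rho_k: the terms eps/rho_k, grad f/rho_k and u/rho_k vanish, so the rescaled normals, which
   stay in the limiting normal cones because these are cones, converge to
   -G'(wbar)^*[G(wbar) - P_C(G(wbar))]; the limiting normal cone has closed graph.
   The gradient of the augmented Lagrangian comes from the derivative 2 (y - P_C y) of the
   squared distance to C. *)

lemma sq_dist_closest_point_remainder:
  fixes y y' :: "'a::euclidean_space"
  assumes C: "convex C" "closed C" "C \<noteq> {}"
  defines "P \<equiv> closest_point C"
  shows "\<bar>(norm (y' - P y'))\<^sup>2 - (norm (y - P y))\<^sup>2 - 2 * inner (y - P y) (y' - y)\<bar>
           \<le> (norm (y' - y))\<^sup>2"
proof -
  define a where "a = y - P y"
  define h where "h = y' - y"
  have up: "norm (y' - P y') \<le> norm (a + h)"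
    using closest_point_le[OF C(2) closest_point_in_set[OF C(2,3)], of y' y]
    by (simp add: P_def a_def h_def dist_norm)
  have lo: "norm a \<le> norm (y - P y')"
    using closest_point_le[OF C(2) closest_point_in_set[OF C(2,3)], of y y']
    by (simp add: P_def a_def dist_norm)
  have lip: "norm (P y - P y') \<le> norm h"
    using closest_point_lipschitz[OF C, of y y']
    by (simp add: P_def h_def dist_norm norm_minus_commute)
  have upper: "(norm (y' - P y'))\<^sup>2 \<le> (norm a)\<^sup>2 + 2 * inner a h + (norm h)\<^sup>2"
  proof -
    have "(norm (y' - P y'))\<^sup>2 \<le> (norm (a + h))\<^sup>2" using up by (simp add: power_mono)
    also have "\<dots> = (norm a)\<^sup>2 + 2 * inner a h + (norm h)\<^sup>2"
      by (simp add: power2_norm_eq_inner inner_add algebra_simps inner_commute)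
    finally show ?thesis .
  qed
  have "\<bar>inner (P y - P y') h\<bar> \<le> norm (P y - P y') * norm h" by (rule Cauchy_Schwarz_ineq2)
  also have "\<dots> \<le> (norm h)\<^sup>2" using lip by (simp add: power2_eq_square mult_right_mono)
  finally have cs: "\<bar>inner (P y - P y') h\<bar> \<le> (norm h)\<^sup>2" .
  have lower: "(norm a)\<^sup>2 + 2 * inner a h - (norm h)\<^sup>2 \<le> (norm (y' - P y'))\<^sup>2"
  proof -
    have "(norm a)\<^sup>2 \<le> (norm (y - P y'))\<^sup>2" using lo by (simp add: power_mono)
    moreover have "(norm (y' - P y'))\<^sup>2 = (norm (y - P y'))\<^sup>2 + 2 * inner (y - P y') h + (norm h)\<^sup>2"
      by (simp add: h_def power2_norm_eq_inner inner_add algebra_simps inner_commute)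
    moreover have "inner (y - P y') h = inner a h + inner (P y - P y') h"
      by (simp add: a_def inner_diff_left)
    ultimately show ?thesis using cs by linarith
  qed
  show ?thesis using upper lower by (simp add: a_def h_def)
qed

lemma has_derivative_sq_dist_closest_point:
  fixes y :: "'a::euclidean_space"
  assumes "convex C" "closed C" "C \<noteq> {}"
  shows "((\<lambda>y. (norm (y - closest_point C y))\<^sup>2) has_derivative
           (\<lambda>h. 2 * inner (y - closest_point C y) h)) (at y)"
  unfolding has_derivative_at_alt
proof (intro conjI allI impI)
  show "bounded_linear (\<lambda>h. 2 * inner (y - closest_point C y) h)"
    by (intro bounded_linear_intros)
  fix e :: real assume "0 < e"
  show "\<exists>d>0. \<forall>y'. norm (y' - y) < d \<longrightarrow>
          norm ((norm (y' - closest_point C y'))\<^sup>2 - (norm (y - closest_point C y))\<^sup>2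
            - 2 * inner (y - closest_point C y) (y' - y)) \<le> e * norm (y' - y)"
  proof (intro exI[of _ e] conjI allI impI \<open>0 < e\<close>)
    fix y' assume "norm (y' - y) < e"
    then have "(norm (y' - y))\<^sup>2 \<le> e * norm (y' - y)"
      by (simp add: power2_eq_square mult_right_mono)
    with sq_dist_closest_point_remainder[OF assms, of y' y]
    show "norm ((norm (y' - closest_point C y'))\<^sup>2 - (norm (y - closest_point C y))\<^sup>2
            - 2 * inner (y - closest_point C y) (y' - y)) \<le> e * norm (y' - y)"
      by simp
  qed
qed

lemma grad_eqI:
  assumes "GDERIV F x :> g"
  shows "grad F x = g"
  unfolding grad_def
proof (rule the_equality)
  show "GDERIV F x :> g" by (rule assms)
  fix g' assume "GDERIV F x :> g'"
  then have "(\<lambda>h. inner h g') = (\<lambda>h. inner h g)"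
    using assms has_derivative_unique unfolding gderiv_def by blast
  then have "inner (g' - g) g' = inner (g' - g) g" by metis
  then have "inner (g' - g) (g' - g) = 0" by (simp add: inner_diff_right)
  then show "g' = g" by simp
qed

lemma grad_augLag:
  fixes f :: "'w::euclidean_space \<Rightarrow> real" and G :: "'w \<Rightarrow> 'y::euclidean_space"
    and \<rho> :: real and lam :: 'y
  assumes f_deriv: "(f has_derivative blinfun_apply f'x) (at x)"
    and G_deriv: "(G has_derivative blinfun_apply G'x) (at x)"
    and C: "convex C" "closed C" "C \<noteq> {}"
  defines "z \<equiv> G x + lam /\<^sub>R \<rho>"
  shows "grad (\<lambda>x. augLag f G C \<rho> x lam) x =
     adjoint (blinfun_apply f'x) 1 + \<rho> *\<^sub>R adjoint (blinfun_apply G'x) (z - projC C z)"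
proof (rule grad_eqI)
  have lin: "linear (blinfun_apply f'x)" "linear (blinfun_apply G'x)"
    by (simp_all add: blinfun.bounded_linear_right bounded_linear.linear)
  have "((\<lambda>x. G x + lam /\<^sub>R \<rho>) has_derivative blinfun_apply G'x) (at x)"
    using G_deriv by (auto intro!: derivative_eq_intros)
  from diff_chain_at[OF this has_derivative_sq_dist_closest_point[OF C]]
  have sq_dist: "((\<lambda>x. (norm (G x + lam /\<^sub>R \<rho> - closest_point C (G x + lam /\<^sub>R \<rho>)))\<^sup>2) has_derivative
      (\<lambda>h. 2 * inner (z - closest_point C z) (blinfun_apply G'x h))) (at x)"
    unfolding z_def o_def .
  have "((\<lambda>x. augLag f G C \<rho> x lam) has_derivative
     (\<lambda>h. blinfun_apply f'x h + \<rho> / 2 * (2 * inner (z - projC C z) (blinfun_apply G'x h)))) (at x)"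
    unfolding augLag_def distC_def projC_def by (intro derivative_intros f_deriv sq_dist)
  also have "(\<lambda>h. blinfun_apply f'x h + \<rho> / 2 * (2 * inner (z - projC C z) (blinfun_apply G'x h)))
      = (\<lambda>h. inner h (adjoint (blinfun_apply f'x) 1 + \<rho> *\<^sub>R adjoint (blinfun_apply G'x) (z - projC C z)))"
    by (simp add: inner_add_right adjoint_works[OF lin(1)] adjoint_works[OF lin(2)] inner_commute)
  finally show "GDERIV (\<lambda>x. augLag f G C \<rho> x lam) x :>
      adjoint (blinfun_apply f'x) 1 + \<rho> *\<^sub>R adjoint (blinfun_apply G'x) (z - projC C z)"
    unfolding gderiv_def .
qed

lemma norm_adjoint_diff_le:
  fixes A B :: "'w::euclidean_space \<Rightarrow>\<^sub>L 'y::euclidean_space"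
  shows "norm (adjoint (blinfun_apply A) y - adjoint (blinfun_apply B) y')
     \<le> norm y * norm (A - B) + norm (y - y') * norm B"
proof -
  have lA: "linear (blinfun_apply A)" and lB: "linear (blinfun_apply B)"
    by (simp_all add: blinfun.bounded_linear_right bounded_linear.linear)
  define d where "d = adjoint (blinfun_apply A) y - adjoint (blinfun_apply B) y'"
  have "norm d * norm d = inner d d" by (simp add: power2_norm_eq_inner flip: power2_eq_square)
  also have "\<dots> = inner d (adjoint (blinfun_apply A) y) - inner d (adjoint (blinfun_apply B) y')"
    by (subst (2) d_def) (simp add: inner_diff_right)
  also have "\<dots> = inner (blinfun_apply (A - B) d) y + inner (blinfun_apply B d) (y - y')"
    by (simp add: adjoint_works[OF lA] adjoint_works[OF lB] blinfun.diff_left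
        inner_diff_left inner_diff_right)
  also have "\<dots> \<le> norm (blinfun_apply (A - B) d) * norm y + norm (blinfun_apply B d) * norm (y - y')"
    by (intro add_mono norm_cauchy_schwarz)
  also have "\<dots> \<le> (norm (A - B) * norm d) * norm y + (norm B * norm d) * norm (y - y')"
    by (intro add_mono mult_right_mono norm_blinfun norm_ge_zero)
  finally have "norm d * norm d \<le> norm d * (norm y * norm (A - B) + norm (y - y') * norm B)"
    by (simp add: algebra_simps)
  then show ?thesis
    unfolding d_def[symmetric] by (cases "norm d = 0") simp_all
qed

lemma tendsto_adjoint:
  fixes A :: "nat \<Rightarrow> 'w::euclidean_space \<Rightarrow>\<^sub>L 'y::euclidean_space"
  assumes "A \<longlonglongrightarrow> B" "y \<longlonglongrightarrow> y'"
  shows "(\<lambda>j. adjoint (blinfun_apply (A j)) (y j)) \<longlonglongrightarrow> adjoint (blinfun_apply B) y'"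
proof -
  have "(\<lambda>j. norm (y j) * norm (A j - B) + norm (y j - y') * norm B)
      \<longlonglongrightarrow> norm y' * norm (B - B) + norm (y' - y') * norm B"
    by (intro tendsto_intros assms)
  then have "(\<lambda>j. norm (y j) * norm (A j - B) + norm (y j - y') * norm B) \<longlonglongrightarrow> 0"
    by simp
  then have "(\<lambda>j. adjoint (blinfun_apply (A j)) (y j) - adjoint (blinfun_apply B) y') \<longlonglongrightarrow> 0"
    by (rule Lim_null_comparison[OF always_eventually, rotated]) (simp add: norm_adjoint_diff_le)
  then show ?thesis by (simp add: LIM_zero_iff)
qed

lemma tendsto_inverse_scaleR_bounded:
  fixes \<rho> :: "'i \<Rightarrow> real" and e :: "'i \<Rightarrow> 'a::real_normed_vector"
  assumes "filterlim \<rho> at_top F" "bounded (range e)"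
  shows "((\<lambda>j. inverse (\<rho> j) *\<^sub>R e j) \<longlongrightarrow> 0) F"
proof -
  obtain B where B: "\<And>j. norm (e j) \<le> B" using assms(2) unfolding bounded_iff by blast
  have "((\<lambda>j. \<bar>inverse (\<rho> j)\<bar> * B) \<longlongrightarrow> \<bar>0\<bar> * B) F"
    by (intro tendsto_intros tendsto_inverse_0_at_top assms(1))
  then have "((\<lambda>j. \<bar>inverse (\<rho> j)\<bar> * B) \<longlongrightarrow> 0) F" by simp
  then show ?thesis
    by (rule Lim_null_comparison[OF always_eventually, rotated])
       (simp_all add: mult_left_mono[OF B])
qed

lemma limNormal_imp_mem: "v \<in> limNormal D x \<Longrightarrow> x \<in> D"
  unfolding limNormal_def by (auto split: if_splits)

lemma zero_mem_limNormal:
  assumes "x \<in> D"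
  shows "0 \<in> limNormal D x"
proof -
  have "x \<in> projSet D x" using assms by (simp add: projSet_def)
  then have "0 \<in> {t *\<^sub>R (x - p) | t p. t \<ge> 0 \<and> p \<in> projSet D x}" by force
  then show ?thesis
    unfolding limNormal_def if_P[OF assms] mem_Collect_eq by (blast intro: tendsto_const)
qed

lemma limNormal_scaleR:
  assumes "v \<in> limNormal D x" "c \<ge> 0"
  shows "c *\<^sub>R v \<in> limNormal D x"
proof -
  have "x \<in> D" using assms(1) by (rule limNormal_imp_mem)
  with assms(1) obtain X vs where X: "X \<longlonglongrightarrow> x" "vs \<longlonglongrightarrow> v"
     "\<And>k. vs k \<in> {t *\<^sub>R (X k - p) | t p. t \<ge> 0 \<and> p \<in> projSet D (X k)}"
    unfolding limNormal_def by auto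
  have "(\<lambda>k. c *\<^sub>R vs k) \<longlonglongrightarrow> c *\<^sub>R v" by (intro tendsto_intros X)
  moreover have "c *\<^sub>R vs k \<in> {t *\<^sub>R (X k - p) | t p. t \<ge> 0 \<and> p \<in> projSet D (X k)}" for k
  proof -
    from X(3)[of k] obtain t p where "vs k = t *\<^sub>R (X k - p)" "t \<ge> 0" "p \<in> projSet D (X k)"
      by blast
    with assms(2) show ?thesis by (auto intro!: exI[of _ "c * t"])
  qed
  ultimately show ?thesis using \<open>x \<in> D\<close> X(1) unfolding limNormal_def by auto
qed

lemma limNormal_closed_graph:
  fixes x :: "nat \<Rightarrow> 'a::euclidean_space"
  assumes "xbar \<in> D" and x: "x \<longlonglongrightarrow> xbar" and a: "a \<longlonglongrightarrow> v"
    and aN: "\<And>j. a j \<in> limNormal D (x j)"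
  shows "v \<in> limNormal D xbar"
proof -
  let ?prox = "\<lambda>y b. b \<in> {t *\<^sub>R (y - p) | t p. t \<ge> 0 \<and> p \<in> projSet D y}"
  have "\<forall>j. \<exists>yb. dist (fst yb) (x j) < inverse (real (Suc j)) \<and> dist (snd yb) (a j) < inverse (real (Suc j))
      \<and> ?prox (fst yb) (snd yb)"
  proof
    fix j
    have "x j \<in> D" using aN[of j] by (rule limNormal_imp_mem)
    with aN[of j] obtain X vs where X: "X \<longlonglongrightarrow> x j" "vs \<longlonglongrightarrow> a j" "\<And>k. ?prox (X k) (vs k)"
      unfolding limNormal_def by auto
    have "eventually (\<lambda>k. dist (X k) (x j) < inverse (real (Suc j))) sequentially"
      by (rule tendstoD[OF X(1)]) simp
    moreover have "eventually (\<lambda>k. dist (vs k) (a j) < inverse (real (Suc j))) sequentially"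
      by (rule tendstoD[OF X(2)]) simp
    ultimately obtain k where "dist (X k) (x j) < inverse (real (Suc j))"
        "dist (vs k) (a j) < inverse (real (Suc j))"
      unfolding eventually_sequentially by (metis le_add1 add.commute)
    with X(3)[of k] show "\<exists>yb. dist (fst yb) (x j) < inverse (real (Suc j))
        \<and> dist (snd yb) (a j) < inverse (real (Suc j)) \<and> ?prox (fst yb) (snd yb)"
      by (intro exI[of _ "(X k, vs k)"]) simp
  qed
  from choice[OF this] obtain Y where Y: "\<And>j. dist (fst (Y j)) (x j) < inverse (real (Suc j))"
      "\<And>j. dist (snd (Y j)) (a j) < inverse (real (Suc j))" "\<And>j. ?prox (fst (Y j)) (snd (Y j))"
    by blast
  define y b where "y = fst \<circ> Y" and "b = snd \<circ> Y"
  have inv0: "(\<lambda>j. inverse (real (Suc j))) \<longlonglongrightarrow> 0" by (rule LIMSEQ_inverse_real_of_nat)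
  have dy: "(\<lambda>j. y j - x j) \<longlonglongrightarrow> 0"
    by (rule Lim_null_comparison[OF always_eventually inv0])
       (use Y(1) in \<open>auto simp: y_def dist_norm intro: less_imp_le\<close>)
  have db: "(\<lambda>j. b j - a j) \<longlonglongrightarrow> 0"
    by (rule Lim_null_comparison[OF always_eventually inv0])
       (use Y(2) in \<open>auto simp: b_def dist_norm intro: less_imp_le\<close>)
  have "y \<longlonglongrightarrow> xbar" using tendsto_add[OF dy x] by simp
  moreover have "b \<longlonglongrightarrow> v" using tendsto_add[OF db a] by simp
  ultimately show ?thesis
    using assms(1) Y(3) unfolding limNormal_def y_def b_def comp_def by auto
qed

lemma limNormal_of_scaled_stationarity:
  fixes x :: "nat \<Rightarrow> 'a::euclidean_space"
  assumes x: "x \<longlonglongrightarrow> xbar" and xbar: "xbar \<in> D"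
    and \<rho>: "filterlim \<rho> at_top sequentially" "\<And>j. \<rho> j > 0"
    and e: "bounded (range e)" and g: "g \<longlonglongrightarrow> gbar" and q: "q \<longlonglongrightarrow> qbar"
    and stat: "\<And>j. e j \<in> (\<lambda>v. g j + \<rho> j *\<^sub>R q j + v) ` limNormal D (x j)"
  shows "- qbar \<in> limNormal D xbar"
proof -
  define a where "a j = inverse (\<rho> j) *\<^sub>R e j - inverse (\<rho> j) *\<^sub>R g j - q j" for j
  have "a j \<in> limNormal D (x j)" for j
  proof -
    from stat[of j] obtain v where v: "v \<in> limNormal D (x j)" "e j = g j + \<rho> j *\<^sub>R q j + v"
      by blast
    have "a j = inverse (\<rho> j) *\<^sub>R v"
      using \<rho>(2)[of j] by (simp add: a_def v(2) scaleR_add_right)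
    then show ?thesis using limNormal_scaleR[OF v(1)] \<rho>(2)[of j] by simp
  qed
  moreover have "a \<longlonglongrightarrow> 0 - 0 *\<^sub>R gbar - qbar"
    unfolding a_def
    by (intro tendsto_diff tendsto_scaleR tendsto_inverse_scaleR_bounded tendsto_inverse_0_at_top
        \<rho>(1) e g q)
  ultimately show ?thesis using limNormal_closed_graph[OF xbar x] by simp
qed

lemma penalty_pos:
  fixes \<rho> :: "nat \<Rightarrow> real"
  assumes "\<rho> 0 > 0" "\<beta> > 1" "\<And>k. \<rho> (Suc k) = \<rho> k \<or> \<rho> (Suc k) = \<beta> * \<rho> k"
  shows "\<rho> k > 0"
proof (induction k)
  case (Suc k) then show ?case using assms(2) assms(3)[of k] by auto
qed (rule assms(1))

lemma penalty_incseq: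
  fixes \<rho> :: "nat \<Rightarrow> real"
  assumes "\<rho> 0 > 0" "\<beta> > 1" "\<And>k. \<rho> (Suc k) = \<rho> k \<or> \<rho> (Suc k) = \<beta> * \<rho> k"
  shows "incseq \<rho>"
proof (rule incseq_SucI)
  fix k
  have "\<rho> k \<le> \<beta> * \<rho> k" using penalty_pos[OF assms, of k] assms(2) by simp
  then show "\<rho> k \<le> \<rho> (Suc k)" using assms(3)[of k] by auto
qed

lemma penalty_eventually_const:
  fixes \<rho> :: "nat \<Rightarrow> real"
  assumes "\<rho> 0 > 0" "\<beta> > 1" "\<And>k. \<rho> (Suc k) = \<rho> k \<or> \<rho> (Suc k) = \<beta> * \<rho> k"
    and "bdd_above (range \<rho>)"
  shows "\<exists>K. \<forall>k\<ge>K. \<rho> (Suc k) = \<rho> k"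
proof -
  have inc: "incseq \<rho>" by (rule penalty_incseq[OF assms(1-3)])
  have "\<rho> \<longlonglongrightarrow> (SUP k. \<rho> k)" by (rule LIMSEQ_incseq_SUP[OF assms(4) inc])
  then have "(\<lambda>k. \<rho> (Suc k) - \<rho> k) \<longlonglongrightarrow> 0"
    using LIMSEQ_Suc tendsto_diff by fastforce
  moreover have "(\<beta> - 1) * \<rho> 0 > 0" using assms(1,2) by simp
  ultimately have "eventually (\<lambda>k. dist (\<rho> (Suc k) - \<rho> k) 0 < (\<beta> - 1) * \<rho> 0) sequentially"
    by (rule tendstoD)
  then obtain K where K: "\<And>k. k \<ge> K \<Longrightarrow> \<bar>\<rho> (Suc k) - \<rho> k\<bar> < (\<beta> - 1) * \<rho> 0"
    unfolding eventually_sequentially dist_real_def by auto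
  have "\<rho> (Suc k) = \<rho> k" if "k \<ge> K" for k
  proof (rule ccontr)
    assume "\<rho> (Suc k) \<noteq> \<rho> k"
    then have "\<rho> (Suc k) - \<rho> k = (\<beta> - 1) * \<rho> k" using assms(3)[of k] by (auto simp: algebra_simps)
    moreover have "(\<beta> - 1) * \<rho> 0 \<le> (\<beta> - 1) * \<rho> k"
      using inc assms(2) by (simp add: incseqD)
    ultimately show False using K[OF that] by linarith
  qed
  then show ?thesis by blast
qed

lemma tendsto_zero_of_eventually_contracting:
  fixes V :: "nat \<Rightarrow> real"
  assumes "\<And>k. V k \<ge> 0" "0 \<le> \<eta>" "\<eta> < 1" "\<And>k. k \<ge> K \<Longrightarrow> V (Suc k) \<le> \<eta> * V k"
  shows "V \<longlonglongrightarrow> 0"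
proof -
  have geom: "V (n + K) \<le> \<eta> ^ n * V K" for n
  proof (induction n)
    case (Suc n)
    have "V (Suc n + K) \<le> \<eta> * V (n + K)" using assms(4)[of "n + K"] by simp
    also have "\<dots> \<le> \<eta> * (\<eta> ^ n * V K)" using Suc assms(2) by (rule mult_left_mono)
    finally show ?case by simp
  qed simp
  have "(\<lambda>n. \<eta> ^ n * V K) \<longlonglongrightarrow> 0 * V K"
    using assms(2,3) by (intro tendsto_mult LIMSEQ_power_zero tendsto_const) simp
  then have "(\<lambda>n. \<eta> ^ n * V K) \<longlonglongrightarrow> 0" by simp
  then have "(\<lambda>n. V (n + K)) \<longlonglongrightarrow> 0"
    by (rule Lim_null_comparison[OF always_eventually, rotated]) (simp add: geom assms(1))
  then show ?thesis by (rule LIMSEQ_offset)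
qed

lemma filterlim_at_top_incseq_unbounded:
  fixes X :: "nat \<Rightarrow> real"
  assumes "incseq X" "\<not> bdd_above (range X)"
  shows "filterlim X at_top sequentially"
  unfolding filterlim_at_top eventually_sequentially
proof
  fix Z
  obtain N where "Z \<le> X N" using assms(2) by (meson bdd_aboveI2 linorder_le_cases)
  then show "\<exists>N. \<forall>k\<ge>N. Z \<le> X k" using assms(1) by (meson incseqD order_trans)
qed

lemma closed_mem_of_dist_tendsto_zero:
  assumes "closed C" "\<And>j. p j \<in> C" "y \<longlonglongrightarrow> ybar" "(\<lambda>j. norm (y j - p j)) \<longlonglongrightarrow> 0"
  shows "ybar \<in> C"
proof -
  have "(\<lambda>j. y j - (y j - p j)) \<longlonglongrightarrow> ybar - 0"
    using assms(3,4) by (intro tendsto_diff) (simp_all add: tendsto_norm_zero_iff)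
  then have "p \<longlonglongrightarrow> ybar" by simp
  then show ?thesis by (rule closed_sequentially[OF assms(1) assms(2)])
qed

lemma subseq_Suc_tendsto:
  assumes "strict_mono r" "(X \<circ> r) \<longlonglongrightarrow> L"
  obtains s where "strict_mono s" "(\<lambda>j. X (Suc (s j))) \<longlonglongrightarrow> L"
proof
  define s where "s j = r (Suc j) - 1" for j
  have sS: "Suc (s j) = r (Suc j)" for j
    using seq_suble[OF assms(1), of "Suc j"] by (simp add: s_def)
  show "strict_mono s"
    unfolding strict_mono_Suc_iff using assms(1) sS by (metis Suc_less_SucD strict_mono_Suc_iff)
  show "(\<lambda>j. X (Suc (s j))) \<longlonglongrightarrow> L"
    using LIMSEQ_Suc[OF assms(2)] by (simp add: sS)
qed

locale augLag_iteration =
  fixes f :: "'w::euclidean_space \<Rightarrow> real" and f' :: "'w \<Rightarrow> ('w \<Rightarrow>\<^sub>L real)"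
    and G :: "'w \<Rightarrow> 'y::euclidean_space" and G' :: "'w \<Rightarrow> ('w \<Rightarrow>\<^sub>L 'y)"
    and C :: "'y set" and D :: "'w set" and \<beta> \<eta> :: real and U :: "'y set"
    and w \<epsilon> :: "nat \<Rightarrow> 'w" and u :: "nat \<Rightarrow> 'y" and \<rho> :: "nat \<Rightarrow> real"
  assumes f_deriv: "\<And>x. (f has_derivative blinfun_apply (f' x)) (at x)"
    and f'_cont: "continuous_on UNIV f'"
    and G_deriv: "\<And>x. (G has_derivative blinfun_apply (G' x)) (at x)"
    and G'_cont: "continuous_on UNIV G'"
    and C: "convex C" "closed C" "C \<noteq> {}"
    and rho_0_pos: "\<rho> 0 > 0" and beta: "\<beta> > 1" and eta: "0 < \<eta>" "\<eta> < 1"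
    and U_bdd: "bounded U" and u_in: "\<And>k. u k \<in> U"
    and step: "\<And>k. \<epsilon> (Suc k) \<in>
        (\<lambda>v. grad (\<lambda>x. augLag f G C (\<rho> k) x (u k)) (w (Suc k)) + v) ` limNormal D (w (Suc k))"
    and rho_upd: "\<And>k. \<rho> (Suc k) =
        (if k = 0 \<or> Vfun G C (\<rho> k) (w (Suc k)) (u k) \<le> \<eta> * Vfun G C (\<rho> (k - 1)) (w k) (u (k - 1))
         then \<rho> k else \<beta> * \<rho> k)"
    and eps_bdd: "bounded (range \<epsilon>)"
begin

definition shifted :: "nat \<Rightarrow> 'y" where
  "shifted k = G (w (Suc k)) + u k /\<^sub>R \<rho> k"

lemma penalty_step: "\<rho> (Suc k) = \<rho> k \<or> \<rho> (Suc k) = \<beta> * \<rho> k"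
  using rho_upd[of k] by auto

lemma rho_pos: "\<rho> k > 0"
  by (rule penalty_pos[OF rho_0_pos beta penalty_step])

lemma iterate_in_D: "w (Suc k) \<in> D"
  using step[of k] by (auto dest: limNormal_imp_mem)

lemma stationarity:
  "\<epsilon> (Suc k) \<in> (\<lambda>v. adjoint (blinfun_apply (f' (w (Suc k)))) 1
      + \<rho> k *\<^sub>R adjoint (blinfun_apply (G' (w (Suc k)))) (shifted k - projC C (shifted k)) + v)
     ` limNormal D (w (Suc k))"
  using step[of k] unfolding shifted_def grad_augLag[OF f_deriv G_deriv C] .

lemma feasible_of_bounded_penalty:
  assumes "bdd_above (range \<rho>)" and s: "strict_mono s" and conv: "(\<lambda>j. w (Suc (s j))) \<longlonglongrightarrow> wbar"
  shows "G wbar \<in> C"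
proof -
  define V where "V k = Vfun G C (\<rho> k) (w (Suc k)) (u k)" for k
  obtain K where K: "\<And>k. k \<ge> K \<Longrightarrow> \<rho> (Suc k) = \<rho> k"
    using penalty_eventually_const[OF rho_0_pos beta penalty_step assms(1)] by blast
  have "V (Suc k) \<le> \<eta> * V k" if "k \<ge> K" for k
  proof -
    have "\<rho> (Suc (Suc k)) \<noteq> \<beta> * \<rho> (Suc k)" using K[of "Suc k"] that beta rho_pos[of "Suc k"] by simp
    then show ?thesis using rho_upd[of "Suc k"] by (auto simp: V_def split: if_splits)
  qed
  then have "V \<longlonglongrightarrow> 0"
    using eta by (intro tendsto_zero_of_eventually_contracting) (auto simp: V_def Vfun_def)
  from LIMSEQ_subseq_LIMSEQ[OF this s]
  have dist: "(\<lambda>j. norm (G (w (Suc (s j))) - projC C (shifted (s j)))) \<longlonglongrightarrow> 0"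
    by (simp add: o_def V_def Vfun_def shifted_def)
  have "(\<lambda>j. G (w (Suc (s j)))) \<longlonglongrightarrow> G wbar"
    using has_derivative_continuous[OF G_deriv] conv by (rule isCont_tendsto_compose)
  from closed_mem_of_dist_tendsto_zero[OF C(2) _ this dist] show ?thesis
    by (simp add: projC_def closest_point_in_set[OF C(2,3)])
qed

lemma limNormal_of_unbounded_penalty:
  assumes "\<not> bdd_above (range \<rho>)" and s: "strict_mono s"
    and conv: "(\<lambda>j. w (Suc (s j))) \<longlonglongrightarrow> wbar" and "wbar \<in> D"
  shows "- adjoint (blinfun_apply (G' wbar)) (G wbar - projC C (G wbar)) \<in> limNormal D wbar"
proof -
  have "incseq \<rho>" by (rule penalty_incseq[OF rho_0_pos beta penalty_step])
  from filterlim_compose[OF filterlim_at_top_incseq_unbounded[OF this assms(1)] filterlim_subseq[OF s]]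
  have top: "filterlim (\<lambda>j. \<rho> (s j)) at_top sequentially" .
  have "bounded (range (\<lambda>j. u (s j)))" using U_bdd u_in by (auto intro: bounded_subset)
  then have "(\<lambda>j. u (s j) /\<^sub>R \<rho> (s j)) \<longlonglongrightarrow> 0" by (rule tendsto_inverse_scaleR_bounded[OF top])
  then have "(\<lambda>j. shifted (s j)) \<longlonglongrightarrow> G wbar + 0"
    unfolding shifted_def
    by (intro tendsto_add isCont_tendsto_compose[OF has_derivative_continuous[OF G_deriv] conv])
  then have q: "(\<lambda>j. shifted (s j) - projC C (shifted (s j))) \<longlonglongrightarrow> G wbar - projC C (G wbar)"
    unfolding projC_def
    by (intro tendsto_diff isCont_tendsto_compose[OF continuous_at_closest_point[OF C]]) simp_all
  have f'c: "(\<lambda>j. f' (w (Suc (s j)))) \<longlonglongrightarrow> f' wbar" and G'c: "(\<lambda>j. G' (w (Suc (s j)))) \<longlonglongrightarrow> G' wbar"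
    using f'_cont G'_cont conv by (auto intro: continuous_on_tendsto_compose)
  have e: "bounded (range (\<lambda>j. \<epsilon> (Suc (s j))))" using eps_bdd by (auto intro: bounded_subset)
  show ?thesis
    by (rule limNormal_of_scaled_stationarity[OF conv assms(4) top rho_pos e
          tendsto_adjoint[OF f'c tendsto_const] tendsto_adjoint[OF G'c q] stationarity])
qed

end

theorem mainTheorem8:
  fixes f :: "'w::euclidean_space \<Rightarrow> real"
    and f' :: "'w \<Rightarrow> ('w \<Rightarrow>\<^sub>L real)"
    and G :: "'w \<Rightarrow> 'y::euclidean_space"
    and G' :: "'w \<Rightarrow> ('w \<Rightarrow>\<^sub>L 'y)"
    and C :: "'y set" and D :: "'w set"
    and \<rho>0 \<beta> \<eta> :: real and U :: "'y set"
    and w :: "nat \<Rightarrow> 'w" and \<epsilon> :: "nat \<Rightarrow> 'w"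
    and u :: "nat \<Rightarrow> 'y" and \<rho> :: "nat \<Rightarrow> real"
    and wbar :: 'w
  assumes f_deriv: "\<And>x. (f has_derivative blinfun_apply (f' x)) (at x)"
    and f'_cont: "continuous_on UNIV f'"
    and G_deriv: "\<And>x. (G has_derivative blinfun_apply (G' x)) (at x)"
    and G'_cont: "continuous_on UNIV G'"
    and C_ne: "C \<noteq> {}" and C_closed: "closed C" and C_convex: "convex C"
    and D_ne: "D \<noteq> {}" and D_closed: "closed D"
    and rho0_pos: "\<rho>0 > 0" and beta: "\<beta> > 1" and eta: "0 < \<eta>" "\<eta> < 1"
    and w0: "w 0 \<in> D"
    and U_ne: "U \<noteq> {}" and U_bdd: "bounded U"
    and rho_0: "\<rho> 0 = \<rho>0"
    and u_in: "\<And>k. u k \<in> U"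
    and step: "\<And>k. \<epsilon> (Suc k) \<in>
        (\<lambda>v. grad (\<lambda>x. augLag f G C (\<rho> k) x (u k)) (w (Suc k)) + v) ` limNormal D (w (Suc k))"
    and rho_upd: "\<And>k. \<rho> (Suc k) =
        (if k = 0 \<or> Vfun G C (\<rho> k) (w (Suc k)) (u k) \<le> \<eta> * Vfun G C (\<rho> (k - 1)) (w k) (u (k - 1))
         then \<rho> k else \<beta> * \<rho> k)"
    and eps_bdd: "bounded (range \<epsilon>)"
    and accum: "\<exists>r. strict_mono r \<and> (w \<circ> r) \<longlonglongrightarrow> wbar"
  shows "wbar \<in> D \<and>
         0 \<in> (\<lambda>v. adjoint (blinfun_apply (G' wbar)) (G wbar - projC C (G wbar)) + v) ` limNormal D wbar"
proof -
  interpret augLag_iteration f f' G G' C D \<beta> \<eta> U w \<epsilon> u \<rho>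
    by unfold_locales (use assms in simp_all)
  from accum obtain r where "strict_mono r" "(w \<circ> r) \<longlonglongrightarrow> wbar" by blast
  then obtain s where s: "strict_mono s" and conv: "(\<lambda>j. w (Suc (s j))) \<longlonglongrightarrow> wbar"
    by (rule subseq_Suc_tendsto)
  have wbar: "wbar \<in> D" by (rule closed_sequentially[OF D_closed iterate_in_D conv])
  have "- adjoint (blinfun_apply (G' wbar)) (G wbar - projC C (G wbar)) \<in> limNormal D wbar"
  proof (cases "bdd_above (range \<rho>)")
    case True
    then have "G wbar \<in> C" by (rule feasible_of_bounded_penalty[OF _ s conv])
    then have "G wbar - projC C (G wbar) = 0" by (simp add: projC_def closest_point_self)
    moreover have "linear (adjoint (blinfun_apply (G' wbar)))"
      by (intro adjoint_linear bounded_linear.linear blinfun.bounded_linear_right)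
    ultimately show ?thesis using zero_mem_limNormal[OF wbar] by (simp add: linear_0)
  next
    case False
    then show ?thesis by (rule limNormal_of_unbounded_penalty[OF _ s conv wbar])
  qed
  with wbar show ?thesis by force
qed

end
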